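(* For every positive integer $p$ and every $t\in\{0,\dots,p-1\}$: (1) there exists a $(3p-3t,\ p+3t)$-coloring of $H(3,2p)$ (with main eigenvalue $2p-3$); (2) there exists an $(8p-8t,\ p+8t)$-coloring of $H(4,3p)$ (with main eigenvalue $3p-4$).
   Context: The Hamming graph $H(n,q)$ has vertex set $\mathbb{Z}_q^n$, two vertices adjacent iff they differ in exactly one coordinate. A $(b,c)$-coloring of $H(n,q)$ is a surjective map onto $\{1,2\}$ in which each color-1 vertex has exactly $b$ neighbours of color 2 and each color-2 vertex has exactly $c$ neighbours of color 1; its main eigenvalue is $n(q-1)-(b+c)$. *)

theory Defs
  imports Main
begin

definition hamming_vertices :: "nat \<Rightarrow> nat \<Rightarrow> (nat \<Rightarrow> nat) set" where
  "hamming_vertices n q = {x. (\<forall>i<n. x i < q) \<and> (\<forall>i\<ge>n. x i = 0)}"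

definition hamming_adj :: "nat \<Rightarrow> (nat \<Rightarrow> nat) \<Rightarrow> (nat \<Rightarrow> nat) \<Rightarrow> bool" where
  "hamming_adj n x y \<longleftrightarrow> card {i \<in> {0..<n}. x i \<noteq> y i} = 1"

definition hamming_nbrs :: "nat \<Rightarrow> nat \<Rightarrow> (nat \<Rightarrow> nat) \<Rightarrow> (nat \<Rightarrow> nat) set" where
  "hamming_nbrs n q x = {y \<in> hamming_vertices n q. hamming_adj n x y}"

definition is_bc_coloring ::
  "nat \<Rightarrow> nat \<Rightarrow> nat \<Rightarrow> nat \<Rightarrow> ((nat \<Rightarrow> nat) \<Rightarrow> nat) \<Rightarrow> bool" where
  "is_bc_coloring n q b c f \<longleftrightarrow>
     f ` hamming_vertices n q = {1, 2} \<and>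
     (\<forall>x \<in> hamming_vertices n q. f x = 1 \<longrightarrow>
        card {y \<in> hamming_nbrs n q x. f y = 2} = b) \<and>
     (\<forall>x \<in> hamming_vertices n q. f x = 2 \<longrightarrow>
        card {y \<in> hamming_nbrs n q x. f y = 1} = c)"

definition main_eigenvalue :: "nat \<Rightarrow> nat \<Rightarrow> nat \<Rightarrow> nat \<Rightarrow> int" where
  "main_eigenvalue n q b c = int n * (int q - 1) - (int b + int c)"

end

theory Submission
  imports Defs
begin

text \<open>Cut \<open>Z\<^sub>m\<^sub>p\<close> into m intervals of length p, so that the interval indices
  \<open>x l div p\<close> of a vertex x of H(n, mp) form a vertex of H(n, m). For a line L of H(n, m) in
  direction j, the cell of L consists of the vertices whose interval indices lie on L and whose
  coordinates off j sum to less than k modulo p; colour 2 is the union of the cells of a line system S.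
  Changing coordinate j of x does not affect membership in the cell of L, while changing a coordinate
  i \<noteq> j lands in the cell for exactly k of the mp values, provided the interval indices of x agree
  with L off {i, j}. If the cells are disjoint and every vertex of H(n, m) meets the lines of S in K
  such directions, then x has K k + mp [x has colour 2] one-coordinate changes into colour 2, which
  makes the colouring a (K k, n mp - mp - K k)-colouring. Line systems for H(3, 2p) with K = 3 and
  for H(4, 3p) with K = 8 are verified by evaluation; take k = p - t.\<close>

lemma hamming_nbrs_eq:
  assumes "x \<in> hamming_vertices n q"
  shows "hamming_nbrs n q x = (\<Union>i<n. (\<lambda>a. x(i := a)) ` ({..<q} - {x i}))"
proof (intro equalityI subsetI)
  fix y assume y: "y \<in> hamming_nbrs n q x"
  then obtain i where i: "{l \<in> {0..<n}. x l \<noteq> y l} = {i}"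
    by (auto simp: hamming_nbrs_def hamming_adj_def card_1_singleton_iff)
  have "y = x(i := y i)"
  proof
    fix l
    show "y l = (x(i := y i)) l"
      using i assms y by (cases "l < n") (auto simp: hamming_nbrs_def hamming_vertices_def)
  qed
  moreover have "i < n" "y i \<noteq> x i" "y i < q"
    using i y by (auto simp: hamming_nbrs_def hamming_vertices_def)
  ultimately show "y \<in> (\<Union>i<n. (\<lambda>a. x(i := a)) ` ({..<q} - {x i}))"
    by blast
next
  fix y assume "y \<in> (\<Union>i<n. (\<lambda>a. x(i := a)) ` ({..<q} - {x i}))"
  then obtain i a where "i < n" "a < q" "a \<noteq> x i" "y = x(i := a)"
    by auto
  moreover from this have "{l \<in> {0..<n}. x l \<noteq> y l} = {i}"
    by auto
  ultimately show "y \<in> hamming_nbrs n q x"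
    using assms by (auto simp: hamming_nbrs_def hamming_adj_def hamming_vertices_def)
qed

lemma card_hamming_nbrs_filter:
  assumes x: "x \<in> hamming_vertices n q" and "\<not> P x"
  shows "card {y \<in> hamming_nbrs n q x. P y} = (\<Sum>i<n. card {a. a < q \<and> P (x(i := a))})"
proof -
  txt \<open>Thanks to \<open>\<not> P x\<close> the value \<open>a = x i\<close>, which gives x itself, need not be excluded.\<close>
  let ?A = "\<lambda>i. {a. a < q \<and> P (x(i := a))}"
  have "{y \<in> hamming_nbrs n q x. P y} = (\<Union>i<n. (\<lambda>a. x(i := a)) ` ?A i)" (is "_ = ?U")
  proof (intro equalityI subsetI)
    fix y assume "y \<in> {y \<in> hamming_nbrs n q x. P y}"
    then show "y \<in> (\<Union>i<n. (\<lambda>a. x(i := a)) ` ?A i)"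
      by (auto simp: hamming_nbrs_eq[OF x])
  next
    fix y assume "y \<in> (\<Union>i<n. (\<lambda>a. x(i := a)) ` ?A i)"
    then obtain i a where "i < n" "a < q" "P (x(i := a))" "y = x(i := a)"
      by auto
    moreover have "a \<noteq> x i"
      using \<open>P (x(i := a))\<close> \<open>\<not> P x\<close> by auto
    ultimately show "y \<in> {y \<in> hamming_nbrs n q x. P y}"
      unfolding hamming_nbrs_eq[OF x] by blast
  qed
  moreover have "card ?U = (\<Sum>i<n. card ((\<lambda>a. x(i := a)) ` ?A i))"
  proof (rule card_UN_disjoint)
    show "\<forall>i\<in>{..<n}. \<forall>j\<in>{..<n}. i \<noteq> j \<longrightarrow> (\<lambda>a. x(i := a)) ` ?A i \<inter> (\<lambda>a. x(j := a)) ` ?A j = {}"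
    proof (intro ballI impI)
      fix i j :: nat assume "i \<noteq> j"
      have "x(i := a) \<noteq> x(j := b)" if "P (x(i := a))" for a b
      proof
        assume eq: "x(i := a) = x(j := b)"
        have "a = x i"
          using fun_cong[OF eq, of i] \<open>i \<noteq> j\<close> by simp
        with that \<open>\<not> P x\<close> show False
          by simp
      qed
      then show "(\<lambda>a. x(i := a)) ` ?A i \<inter> (\<lambda>a. x(j := a)) ` ?A j = {}"
        by auto
    qed
  qed auto
  moreover have "\<dots> = (\<Sum>i<n. card (?A i))"
    by (intro sum.cong refl card_image inj_onI) (auto dest: fun_upd_eqD)
  ultimately show ?thesis
    by simp
qed

lemma card_block_residues_less:
  fixes p :: nat
  assumes "0 < p" and "k \<le> p"
  shows "card {a. a div p = e \<and> (a + s) mod p < k} = k"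
proof -
  let ?f = "\<lambda>a. (a + s) mod p"
  let ?B = "{a. a div p = e}"
  have decomp: "a = e * p + a mod p" if "a \<in> ?B" for a
    using that div_mult_mod_eq[of a p] by simp
  have "?B = {e * p..<e * p + p}"
  proof (intro equalityI subsetI)
    fix a assume "a \<in> ?B"
    then show "a \<in> {e * p..<e * p + p}"
      using decomp[of a] assms(1) by (metis atLeastLessThan_iff le_add1 mod_less_divisor nat_add_left_cancel_less)
  next
    fix a assume "a \<in> {e * p..<e * p + p}"
    then show "a \<in> ?B"
      by (auto intro: div_nat_eqI simp: mult.commute)
  qed
  then have card_B: "card ?B = p"
    by simp
  have inj: "inj_on ?f ?B"
  proof (rule inj_onI)
    fix a b assume "a \<in> ?B" "b \<in> ?B" "?f a = ?f b"
    moreover from \<open>?f a = ?f b\<close> have "a mod p = b mod p"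
      by (auto simp: nat_mod_eq_iff)
    ultimately show "a = b"
      using decomp by metis
  qed
  have "?f ` ?B = {..<p}"
    by (rule card_subset_eq) (use assms(1) card_image[OF inj] card_B in auto)
  then have "?f ` {a \<in> ?B. ?f a < k} = {..<k}"
    using assms(2) by (auto simp: image_iff)
  moreover have "inj_on ?f {a \<in> ?B. ?f a < k}"
    by (rule inj_on_subset[OF inj]) auto
  ultimately show ?thesis
    using card_image by fastforce
qed

text \<open>A pair (j, e) stands for the line of H(n, m) through e in direction j, i.e. the words
  agreeing with e outside coordinate j; the entry e ! j is irrelevant.\<close>

type_synonym line = "nat \<times> nat list"

definition in_line_cell :: "nat \<Rightarrow> nat \<Rightarrow> nat \<Rightarrow> line \<Rightarrow> (nat \<Rightarrow> nat) \<Rightarrow> bool" where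
  "in_line_cell n p k L x \<longleftrightarrow>
     (\<forall>l<n. l \<noteq> fst L \<longrightarrow> x l div p = snd L ! l) \<and> (\<Sum>l\<in>{..<n} - {fst L}. x l) mod p < k"

definition line_hits :: "nat \<Rightarrow> line \<Rightarrow> (nat \<Rightarrow> nat) \<Rightarrow> nat" where
  "line_hits n L e =
     card {i \<in> {..<n}. i \<noteq> fst L \<and> (\<forall>l<n. l \<noteq> i \<and> l \<noteq> fst L \<longrightarrow> e l = snd L ! l)}"

definition line_coloured :: "nat \<Rightarrow> nat \<Rightarrow> nat \<Rightarrow> line set \<Rightarrow> (nat \<Rightarrow> nat) \<Rightarrow> bool" where
  "line_coloured n p k S x \<longleftrightarrow> (\<exists>L\<in>S. in_line_cell n p k L x)"

definition valid_lines :: "nat \<Rightarrow> nat \<Rightarrow> line set \<Rightarrow> bool" where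
  "valid_lines n m S \<longleftrightarrow> (\<forall>L\<in>S. fst L < n \<and> (\<forall>l<n. snd L ! l < m))"

definition separated_lines :: "nat \<Rightarrow> line set \<Rightarrow> bool" where
  "separated_lines n S \<longleftrightarrow>
     (\<forall>L\<in>S. \<forall>L'\<in>S. L \<noteq> L' \<longrightarrow> (\<exists>l<n. l \<noteq> fst L \<and> l \<noteq> fst L' \<and> snd L ! l \<noteq> snd L' ! l))"

definition uniform_line_hits :: "nat \<Rightarrow> nat \<Rightarrow> line set \<Rightarrow> nat \<Rightarrow> bool" where
  "uniform_line_hits n m S K \<longleftrightarrow> (\<forall>e. (\<forall>l<n. e l < m) \<longrightarrow> (\<Sum>L\<in>S. line_hits n L e) = K)"

lemma in_line_cell_upd_direction:
  "in_line_cell n p k L (x(fst L := a)) \<longleftrightarrow> in_line_cell n p k L x"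
  unfolding in_line_cell_def by (auto intro!: sum.cong)

lemma card_in_line_cell_upd:
  assumes "i < n" and "i \<noteq> fst L" and "snd L ! i < m" and "0 < p" and "k \<le> p"
  shows "card {a. a < m * p \<and> in_line_cell n p k L (x(i := a))} =
    (if \<forall>l<n. l \<noteq> i \<and> l \<noteq> fst L \<longrightarrow> x l div p = snd L ! l then k else 0)"
proof -
  let ?s = "\<Sum>l\<in>{..<n} - {fst L} - {i}. x l"
  let ?agree = "\<forall>l<n. l \<noteq> i \<and> l \<noteq> fst L \<longrightarrow> x l div p = snd L ! l"
  have "(\<Sum>l\<in>{..<n} - {fst L}. (x(i := a)) l) = a + ?s" for a
    using assms(1,2) by (subst sum.remove[of _ i]) (auto intro!: sum.cong)
  then have cell: "in_line_cell n p k L (x(i := a)) \<longleftrightarrow>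
      ?agree \<and> a div p = snd L ! i \<and> (a + ?s) mod p < k" for a
    unfolding in_line_cell_def using assms(1,2) by (fastforce split: if_splits)
  have "a < m * p" if "a div p = snd L ! i" for a
    using that assms(3,4) div_less_iff_less_mult[of p a m] by simp
  with cell have "{a. a < m * p \<and> in_line_cell n p k L (x(i := a))} =
      (if ?agree then {a. a div p = snd L ! i \<and> (a + ?s) mod p < k} else {})"
    by auto
  then show ?thesis
    using card_block_residues_less[OF assms(4,5)] by auto
qed

lemma sum_card_in_line_cell_upd:
  assumes "fst L < n" and "\<forall>l<n. snd L ! l < m" and "0 < p" and "k \<le> p"
  shows "(\<Sum>i<n. card {a. a < m * p \<and> in_line_cell n p k L (x(i := a))}) =
    m * p * of_bool (in_line_cell n p k L x) + k * line_hits n L (\<lambda>l. x l div p)"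
proof -
  let ?c = "\<lambda>i. card {a. a < m * p \<and> in_line_cell n p k L (x(i := a))}"
  let ?agree = "\<lambda>i. \<forall>l<n. l \<noteq> i \<and> l \<noteq> fst L \<longrightarrow> x l div p = snd L ! l"
  have "?c (fst L) = m * p * of_bool (in_line_cell n p k L x)"
    by (simp add: in_line_cell_upd_direction)
  moreover have "(\<Sum>i\<in>{..<n} - {fst L}. ?c i) = (\<Sum>i\<in>{..<n} - {fst L}. k * of_bool (?agree i))"
    using assms by (intro sum.cong refl) (simp add: card_in_line_cell_upd)
  moreover have "({..<n} - {fst L}) \<inter> {i. ?agree i} = {i \<in> {..<n}. i \<noteq> fst L \<and> ?agree i}"
    by auto
  ultimately show ?thesis
    using assms(1) by (simp add: sum.remove[of _ "fst L"] sum_distrib_left[symmetric] line_hits_def)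
qed

lemma in_line_cell_unique:
  assumes "separated_lines n S" and "L \<in> S" and "L' \<in> S"
    and "in_line_cell n p k L x" and "in_line_cell n p k L' x"
  shows "L = L'"
proof (rule ccontr)
  assume "L \<noteq> L'"
  then obtain l where "l < n" "l \<noteq> fst L" "l \<noteq> fst L'" "snd L ! l \<noteq> snd L' ! l"
    using assms(1-3) unfolding separated_lines_def by blast
  with assms(4,5) show False
    unfolding in_line_cell_def by auto
qed

lemma card_cells_containing:
  assumes "finite S" and "separated_lines n S"
  shows "card {L \<in> S. in_line_cell n p k L x} = of_bool (line_coloured n p k S x)"
proof (cases "line_coloured n p k S x")
  case True
  then obtain L where "L \<in> S" "in_line_cell n p k L x"
    by (auto simp: line_coloured_def)
  then have "{L \<in> S. in_line_cell n p k L x} = {L}"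
    using in_line_cell_unique[OF assms(2)] by blast
  then show ?thesis
    using True by simp
next
  case False
  then have "{L \<in> S. in_line_cell n p k L x} = {}"
    by (auto simp: line_coloured_def)
  with False show ?thesis
    by (simp only: card.empty of_bool_eq)
qed

lemma card_line_coloured_upd:
  assumes "finite S" and "separated_lines n S"
  shows "card {a. a < q \<and> line_coloured n p k S (x(i := a))} =
    (\<Sum>L\<in>S. card {a. a < q \<and> in_line_cell n p k L (x(i := a))})"
proof -
  have "{a. a < q \<and> line_coloured n p k S (x(i := a))} =
      (\<Union>L\<in>S. {a. a < q \<and> in_line_cell n p k L (x(i := a))})"
    by (auto simp: line_coloured_def)
  also have "card \<dots> = (\<Sum>L\<in>S. card {a. a < q \<and> in_line_cell n p k L (x(i := a))})"
  proof (rule card_UN_disjoint)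
    show "\<forall>L\<in>S. \<forall>L'\<in>S. L \<noteq> L' \<longrightarrow>
        {a. a < q \<and> in_line_cell n p k L (x(i := a))} \<inter> {a. a < q \<and> in_line_cell n p k L' (x(i := a))} = {}"
      using in_line_cell_unique[OF assms(2)] by blast
  qed (use assms(1) in auto)
  finally show ?thesis .
qed

lemma sum_card_line_coloured_upd:
  assumes x: "x \<in> hamming_vertices n (m * p)"
    and S: "valid_lines n m S" "finite S" "separated_lines n S" "uniform_line_hits n m S K"
    and k: "0 < p" "k \<le> p"
  shows "(\<Sum>i<n. card {a. a < m * p \<and> line_coloured n p k S (x(i := a))}) =
    K * k + m * p * of_bool (line_coloured n p k S x)"
proof -
  have "\<forall>l<n. x l div p < m"
    using x k(1) by (simp add: hamming_vertices_def div_less_iff_less_mult)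
  then have hits: "(\<Sum>L\<in>S. line_hits n L (\<lambda>l. x l div p)) = K"
    using S(4) by (simp add: uniform_line_hits_def)
  have "(\<Sum>i<n. card {a. a < m * p \<and> line_coloured n p k S (x(i := a))}) =
      (\<Sum>L\<in>S. \<Sum>i<n. card {a. a < m * p \<and> in_line_cell n p k L (x(i := a))})"
    using S(2,3) by (simp add: card_line_coloured_upd sum.swap[of _ S])
  also have "\<dots> = (\<Sum>L\<in>S. m * p * of_bool (in_line_cell n p k L x) + k * line_hits n L (\<lambda>l. x l div p))"
    using S(1) k by (intro sum.cong refl sum_card_in_line_cell_upd) (auto simp: valid_lines_def)
  also have "\<dots> = m * p * (\<Sum>L\<in>S. of_bool (in_line_cell n p k L x)) + k * K"
    by (simp only: sum.distrib hits flip: sum_distrib_left)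
  also have "(\<Sum>L\<in>S. of_bool (in_line_cell n p k L x)) = card {L \<in> S. in_line_cell n p k L x}"
    using S(2) by (simp add: Int_def)
  also have "\<dots> = of_bool (line_coloured n p k S x)"
    by (rule card_cells_containing[OF S(2,3)])
  finally show ?thesis
    by (simp only: ac_simps)
qed

lemma line_colouring_image:
  assumes k: "0 < k" "k \<le> p" and S: "valid_lines n m S" "S \<noteq> {}"
    and off_lines: "\<exists>e. (\<forall>l<n. e l < m) \<and> (\<forall>L\<in>S. \<exists>l<n. l \<noteq> fst L \<and> e l \<noteq> snd L ! l)"
  shows "(\<lambda>x. if line_coloured n p k S x then 2 else (1::nat)) ` hamming_vertices n (m * p) = {1, 2}"
proof -
  have p_pos: "0 < p"
    using k by simp
  obtain e where e: "\<forall>l<n. e l < m" "\<forall>L\<in>S. \<exists>l<n. l \<noteq> fst L \<and> e l \<noteq> snd L ! l"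
    using off_lines by blast
  define x0 where "x0 = (\<lambda>l. if l < n then e l * p else 0)"
  have x0: "x0 \<in> hamming_vertices n (m * p)" "\<not> line_coloured n p k S x0"
    using e p_pos by (auto simp: x0_def hamming_vertices_def line_coloured_def in_line_cell_def)
  obtain L where L: "L \<in> S"
    using S(2) by blast
  define x1 where "x1 = (\<lambda>l. if l < n then snd L ! l * p else 0)"
  have "x1 \<in> hamming_vertices n (m * p)"
    using L S(1) p_pos by (auto simp: x1_def hamming_vertices_def valid_lines_def)
  moreover have "in_line_cell n p k L x1"
    using p_pos k by (auto simp: in_line_cell_def x1_def dvd_sum)
  then have "line_coloured n p k S x1"
    using L by (auto simp: line_coloured_def)
  ultimately show ?thesis
    using x0 by (auto intro: image_eqI[of _ _ x0] image_eqI[of _ _ x1])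
qed

theorem line_colouring_is_bc_coloring:
  assumes k: "0 < k" "k \<le> p"
    and S: "valid_lines n m S" "finite S" "separated_lines n S" "uniform_line_hits n m S K" "S \<noteq> {}"
    and off_lines: "\<exists>e. (\<forall>l<n. e l < m) \<and> (\<forall>L\<in>S. \<exists>l<n. l \<noteq> fst L \<and> e l \<noteq> snd L ! l)"
  shows "is_bc_coloring n (m * p) (K * k) (n * (m * p) - K * k - m * p)
    (\<lambda>x. if line_coloured n p k S x then 2 else 1)"
proof -
  let ?q = "m * p"
  let ?D = "line_coloured n p k S"
  let ?f = "\<lambda>x. if ?D x then 2 else (1::nat)"
  let ?c = "\<lambda>x i. card {a. a < ?q \<and> ?D (x(i := a))}"
  have total: "(\<Sum>i<n. ?c x i) = K * k + ?q * of_bool (?D x)" if "x \<in> hamming_vertices n ?q" for x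
    using k sum_card_line_coloured_upd[OF that S(1-4)] by simp
  have "card {y \<in> hamming_nbrs n ?q x. ?f y = 2} = K * k"
    if x: "x \<in> hamming_vertices n ?q" and "\<not> ?D x" for x
  proof -
    have "{y \<in> hamming_nbrs n ?q x. ?f y = 2} = {y \<in> hamming_nbrs n ?q x. ?D y}"
      by auto
    moreover have "card {y \<in> hamming_nbrs n ?q x. ?D y} = (\<Sum>i<n. ?c x i)"
      using card_hamming_nbrs_filter[OF x, where P = ?D] \<open>\<not> ?D x\<close> by simp
    ultimately show ?thesis
      using total[OF x] \<open>\<not> ?D x\<close> by simp
  qed
  moreover have "card {y \<in> hamming_nbrs n ?q x. ?f y = 1} = n * ?q - K * k - ?q"
    if x: "x \<in> hamming_vertices n ?q" and "?D x" for x
  proof -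
    have "{y \<in> hamming_nbrs n ?q x. ?f y = 1} = {y \<in> hamming_nbrs n ?q x. \<not> ?D y}"
      by auto
    then have "card {y \<in> hamming_nbrs n ?q x. ?f y = 1} = (\<Sum>i<n. card {a. a < ?q \<and> \<not> ?D (x(i := a))})"
      using card_hamming_nbrs_filter[OF x, where P = "\<lambda>y. \<not> ?D y"] \<open>?D x\<close> by simp
    also have "\<dots> = (\<Sum>i<n. ?q - ?c x i)"
    proof (intro sum.cong refl)
      fix i
      have "{a. a < ?q \<and> \<not> ?D (x(i := a))} = {..<?q} - {a. a < ?q \<and> ?D (x(i := a))}"
        by auto
      then show "card {a. a < ?q \<and> \<not> ?D (x(i := a))} = ?q - ?c x i"
        by (simp add: card_Diff_subset subset_iff)
    qed
    also have "\<dots> = n * ?q - (\<Sum>i<n. ?c x i)"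
      by (subst sum_subtractf_nat) (auto intro: card_mono[of "{..<?q}", simplified])
    finally show ?thesis
      using total[OF x] \<open>?D x\<close> by simp
  qed
  moreover have "?f ` hamming_vertices n ?q = {1, 2}"
    using line_colouring_image[OF k S(1,5) off_lines] .
  ultimately show ?thesis
    unfolding is_bc_coloring_def by (auto split: if_splits)
qed

lemma line_hits_cong:
  assumes "\<forall>l<n. e l = e' l"
  shows "line_hits n L e = line_hits n L e'"
  using assms unfolding line_hits_def by (intro arg_cong[where f = card] Collect_cong) auto

lemma line_hits_code:
  "line_hits n L e =
    length (filter (\<lambda>i. i \<noteq> fst L \<and> list_all (\<lambda>l. l = i \<or> l = fst L \<or> e l = snd L ! l) [0..<n]) [0..<n])"
  unfolding line_hits_def length_filter_conv_card list_all_iff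
  by (intro arg_cong[where f = card]) auto

text \<open>code_simp cannot evaluate a bounded existential over nat, so the finite checks below
  are stated through list_ex.\<close>

lemma ex_less_iff_list_ex: "(\<exists>l<n. P l) \<longleftrightarrow> list_ex P [0..<n]"
  by (auto simp: list_ex_iff)

lemma uniform_line_hitsI:
  assumes "\<forall>es\<in>set (List.n_lists n [0..<m]). (\<Sum>L\<in>S. line_hits n L ((!) es)) = K"
  shows "uniform_line_hits n m S K"
  unfolding uniform_line_hits_def
proof (intro allI impI)
  fix e assume e: "\<forall>l<n. e l < m"
  then have "map e [0..<n] \<in> set (List.n_lists n [0..<m])"
    by (auto simp: set_n_lists)
  with assms have "(\<Sum>L\<in>S. line_hits n L ((!) (map e [0..<n]))) = K"
    by blast
  moreover have "line_hits n L ((!) (map e [0..<n])) = line_hits n L e" for L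
    by (rule line_hits_cong) simp
  ultimately show "(\<Sum>L\<in>S. line_hits n L e) = K"
    by simp
qed

definition lines_H3 :: "line set" where
  "lines_H3 = set [(2, [0, 0, 0]), (1, [1, 0, 1]), (0, [0, 1, 0])]"

definition lines_H4 :: "line set" where
  "lines_H4 = set
    [(0, [0, 0, 0, 1]), (0, [0, 0, 0, 2]), (0, [0, 0, 1, 0]), (0, [0, 0, 1, 2]), (0, [0, 1, 1, 0]), (0, [0, 2, 0, 1]),
     (1, [0, 0, 1, 1]), (1, [1, 0, 0, 0]), (1, [2, 0, 1, 1]), (1, [2, 0, 2, 0]), (1, [2, 0, 0, 0]), (1, [2, 0, 2, 1]),
     (2, [0, 2, 0, 0]), (2, [0, 2, 0, 2]), (2, [1, 1, 0, 1]), (2, [1, 1, 0, 2]), (2, [2, 1, 0, 2]), (2, [2, 2, 0, 2]),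
     (3, [0, 0, 2, 0]), (3, [0, 1, 0, 0]), (3, [0, 1, 2, 0]), (3, [1, 0, 2, 0]), (3, [1, 2, 1, 0]), (3, [1, 2, 2, 0])]"

lemma lines_H3:
  "valid_lines 3 2 lines_H3" "separated_lines 3 lines_H3" "uniform_line_hits 3 2 lines_H3 3"
  "\<exists>e. (\<forall>l<3. e l < 2) \<and> (\<forall>L\<in>lines_H3. \<exists>l<3. l \<noteq> fst L \<and> e l \<noteq> snd L ! l)"
proof -
  show "valid_lines 3 2 lines_H3"
    unfolding valid_lines_def lines_H3_def by code_simp
  show "separated_lines 3 lines_H3"
    unfolding separated_lines_def lines_H3_def ex_less_iff_list_ex by code_simp
  show "uniform_line_hits 3 2 lines_H3 3"
    by (rule uniform_line_hitsI) (unfold line_hits_code lines_H3_def, code_simp)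
  show "\<exists>e. (\<forall>l<3. e l < 2) \<and> (\<forall>L\<in>lines_H3. \<exists>l<3. l \<noteq> fst L \<and> e l \<noteq> snd L ! l)"
    by (rule exI[of _ "(!) [1, 0, 0]"]) (unfold lines_H3_def ex_less_iff_list_ex, code_simp)
qed

lemma lines_H4:
  "valid_lines 4 3 lines_H4" "separated_lines 4 lines_H4" "uniform_line_hits 4 3 lines_H4 8"
  "\<exists>e. (\<forall>l<4. e l < 3) \<and> (\<forall>L\<in>lines_H4. \<exists>l<4. l \<noteq> fst L \<and> e l \<noteq> snd L ! l)"
proof -
  show "valid_lines 4 3 lines_H4"
    unfolding valid_lines_def lines_H4_def by code_simp
  show "separated_lines 4 lines_H4"
    unfolding separated_lines_def lines_H4_def ex_less_iff_list_ex by code_simp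
  show "uniform_line_hits 4 3 lines_H4 8"
    by (rule uniform_line_hitsI) (unfold line_hits_code lines_H4_def, code_simp)
  show "\<exists>e. (\<forall>l<4. e l < 3) \<and> (\<forall>L\<in>lines_H4. \<exists>l<4. l \<noteq> fst L \<and> e l \<noteq> snd L ! l)"
    by (rule exI[of _ "(!) [0, 0, 0, 0]"]) (unfold lines_H4_def ex_less_iff_list_ex, code_simp)
qed

theorem corollary2:
  fixes p t :: nat
  assumes "p \<ge> 1" and "t < p"
  shows "(\<exists>f. is_bc_coloring 3 (2*p) (3*p - 3*t) (p + 3*t) f)
           \<and> main_eigenvalue 3 (2*p) (3*p - 3*t) (p + 3*t) = 2 * int p - 3
         \<and> (\<exists>f. is_bc_coloring 4 (3*p) (8*p - 8*t) (p + 8*t) f)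
           \<and> main_eigenvalue 4 (3*p) (8*p - 8*t) (p + 8*t) = 3 * int p - 4"
proof -
  have k: "0 < p - t" "p - t \<le> p"
    using assms by auto
  have "\<exists>f. is_bc_coloring 3 (2 * p) (3 * (p - t)) (3 * (2 * p) - 3 * (p - t) - 2 * p) f"
    using line_colouring_is_bc_coloring[OF k lines_H3(1) _ lines_H3(2,3) _ lines_H3(4)]
    by (auto simp: lines_H3_def)
  moreover have "\<exists>f. is_bc_coloring 4 (3 * p) (8 * (p - t)) (4 * (3 * p) - 8 * (p - t) - 3 * p) f"
    using line_colouring_is_bc_coloring[OF k lines_H4(1) _ lines_H4(2,3) _ lines_H4(4)]
    by (auto simp: lines_H4_def)
  moreover have "3 * (p - t) = 3 * p - 3 * t" "3 * (2 * p) - 3 * (p - t) - 2 * p = p + 3 * t"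
    "8 * (p - t) = 8 * p - 8 * t" "4 * (3 * p) - 8 * (p - t) - 3 * p = p + 8 * t"
    using assms by auto
  moreover have "int (3 * p - 3 * t) = 3 * int p - 3 * int t" "int (8 * p - 8 * t) = 8 * int p - 8 * int t"
    using assms by (simp_all add: of_nat_diff)
  ultimately show ?thesis
    by (simp add: main_eigenvalue_def)
qed

end
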